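(* Let $n\ge 1$ be an integer and let $M_{8n}=\langle a,b : a^4=b^{2n}=1,\ bab^{-1}=a^{-1}\rangle$ be the metacyclic group of order $8n$. Let $\Gamma_{M_{8n}}$ be its non-commuting graph. Then the spectrum of the distance signless Laplacian matrix $D^Q(\Gamma_{M_{8n}})$ (eigenvalues counted with multiplicity, multiplicities being added if two of the listed values coincide) consists of: (a) $8n-4$ with multiplicity $3(2n-1)$; (b) $10n-4$ with multiplicity $2$; (c) $16n-4$ with multiplicity $1$.
   Context: For a finite non-abelian group $G$ with centre $Z(G)$, the non-commuting graph $\Gamma_G$ is the simple undirected graph with vertex set $G\setminus Z(G)$, in which two distinct vertices $u,v$ are adjacent if and only if $uv\ne vu$. For a connected graph $H$, $d_{uv}$ denotes the length of a shortest path between $u$ and $v$; the distance matrix $D(H)$ has $(u,v)$-entry $d_{uv}$. The transmission of a vertex $v$ is $\sum_{u} d_{uv}$, and $Tr(H)$ is the diagonal matrix of vertex transmissions. The distance signless Laplacian matrix is $D^Q(H)=Tr(H)+D(H)$. *)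

theory Defs
  imports "Jordan_Normal_Form.Char_Poly"
begin

definition centre :: "'g set \<Rightarrow> ('g \<Rightarrow> 'g \<Rightarrow> 'g) \<Rightarrow> 'g set" where
  "centre G mul = {z \<in> G. \<forall>x\<in>G. mul z x = mul x z}"

definition ncg_vertices :: "'g set \<Rightarrow> ('g \<Rightarrow> 'g \<Rightarrow> 'g) \<Rightarrow> 'g set" where
  "ncg_vertices G mul = G - centre G mul"

definition ncg_adj :: "'g set \<Rightarrow> ('g \<Rightarrow> 'g \<Rightarrow> 'g) \<Rightarrow> 'g \<Rightarrow> 'g \<Rightarrow> bool" where
  "ncg_adj G mul u v \<longleftrightarrow> u \<in> ncg_vertices G mul \<and> v \<in> ncg_vertices G mul \<and> u \<noteq> v
     \<and> mul u v \<noteq> mul v u"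

definition is_walk :: "'v set \<Rightarrow> ('v \<Rightarrow> 'v \<Rightarrow> bool) \<Rightarrow> 'v list \<Rightarrow> bool" where
  "is_walk V E xs \<longleftrightarrow> xs \<noteq> [] \<and> set xs \<subseteq> V \<and> (\<forall>i. Suc i < length xs \<longrightarrow> E (xs ! i) (xs ! Suc i))"

text \<open>Shortest path length (meaningful for connected graphs).\<close>
definition gdist :: "'v set \<Rightarrow> ('v \<Rightarrow> 'v \<Rightarrow> bool) \<Rightarrow> 'v \<Rightarrow> 'v \<Rightarrow> nat" where
  "gdist V E u v = (LEAST k. \<exists>xs. is_walk V E xs \<and> hd xs = u \<and> last xs = v \<and> length xs = Suc k)"

definition transmission :: "'v set \<Rightarrow> ('v \<Rightarrow> 'v \<Rightarrow> bool) \<Rightarrow> 'v \<Rightarrow> nat" where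
  "transmission V E v = (\<Sum>u\<in>V. gdist V E u v)"

text \<open>D^Q = Tr + D, as a matrix with respect to an enumeration f of the vertices.\<close>
definition dist_signless_laplacian ::
  "'v set \<Rightarrow> ('v \<Rightarrow> 'v \<Rightarrow> bool) \<Rightarrow> (nat \<Rightarrow> 'v) \<Rightarrow> real mat" where
  "dist_signless_laplacian V E f = mat (card V) (card V)
     (\<lambda>(i,j). (if i = j then real (transmission V E (f i)) else 0) + real (gdist V E (f i) (f j)))"

text \<open>Element (i,j) represents a^i b^j with 0 \<le> i < 4, 0 \<le> j < 2n.
  Since b^j a^k b^-j = a^((-1)^j k), (a^i b^j)(a^k b^l) = a^(i + (-1)^j k) b^(j+l).\<close>
definition M8n_carrier :: "nat \<Rightarrow> (nat \<times> nat) set" where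
  "M8n_carrier n = {0..<4} \<times> {0..<2*n}"

definition M8n_mult :: "nat \<Rightarrow> nat \<times> nat \<Rightarrow> nat \<times> nat \<Rightarrow> nat \<times> nat" where
  "M8n_mult n x y = (case x of (i, j) \<Rightarrow> case y of (k, l) \<Rightarrow>
     ((if even j then i + k else i + 3 * k) mod 4, (j + l) mod (2 * n)))"

end

theory Submission
  imports Defs
begin

(* Two non-central elements of M_8n commute iff they lie in the same coset of the centre
   Z = <a^2, b^2>, and M_8n / Z is a Klein four-group; so the non-commuting graph is the complete
   tripartite graph K_(2n,2n,2n). In a complete k-partite graph with parts of size m, vertices of
   distinct parts are at distance 1 and distinct vertices of one part at distance 2, whence
   D^Q = ((k + 1) m - 4) I + U W with U the N x k part-indicator matrix and W = J + U^T.
   By Sylvester's identity det (y I - U W) = y^(N - k) det (y I - W U), and W U = m (I + J)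
   has eigenvalues m (k - 1 times) and (k + 1) m. *)

lemma det_one_minus_mult_comm:
  fixes U :: "'a::idom mat"
  assumes U: "U \<in> carrier_mat N k" and V: "V \<in> carrier_mat k N"
  shows "det (1\<^sub>m N - U * V) = det (1\<^sub>m k - V * U)"
proof -
  define X where "X = four_block_mat (1\<^sub>m N) U V (1\<^sub>m k)"
  define Y where "Y = four_block_mat (1\<^sub>m N) (0\<^sub>m N k) (- V) (1\<^sub>m k)"
  have X: "X \<in> carrier_mat (N + k) (N + k)" and Y: "Y \<in> carrier_mat (N + k) (N + k)"
    unfolding X_def Y_def using U V by auto
  have det_Y: "det Y = 1" unfolding Y_def
    by (subst det_four_block_mat_upper_right_zero[where n = N and m = k]) (use V in auto)
  have "Y * X = four_block_mat (1\<^sub>m N) U (0\<^sub>m k N) (1\<^sub>m k - V * U)"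
    unfolding X_def Y_def using U V
    by (subst mult_four_block_mat[of _ N N _ k _ k _ _ N _ k]) auto
  then have "det (Y * X) = det (1\<^sub>m k - V * U)"
    by (simp, subst det_four_block_mat_lower_left_zero[where n = N and m = k]) (use U V in auto)
  moreover have "X * Y = four_block_mat (1\<^sub>m N - U * V) U (0\<^sub>m k N) (1\<^sub>m k)"
    unfolding X_def Y_def using U V
    by (subst mult_four_block_mat[of _ N N _ k _ k _ _ N _ k]) auto
  then have "det (X * Y) = det (1\<^sub>m N - U * V)"
    by (simp, subst det_four_block_mat_lower_left_zero[where n = N and m = k]) (use U V in auto)
  ultimately show ?thesis
    using det_mult[OF Y X] det_mult[OF X Y] det_Y by simp
qed

lemma det_scalar_minus_mult_I_plus_J:
  fixes U V :: "real mat" and m y :: real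
  assumes U: "U \<in> carrier_mat N k" and V: "V \<in> carrier_mat k N"
    and VU: "V * U = mat k k (\<lambda>(a, b). m * (if a = b then 2 else 1))"
    and "1 \<le> k" "k \<le> N" and "y \<noteq> 0" "y \<noteq> m"
  shows "det (y \<cdot>\<^sub>m 1\<^sub>m N - U * V) = y ^ (N - k) * (y - m) ^ (k - 1) * (y - (real k + 1) * m)"
proof -
  define col where "col = mat k 1 (\<lambda>_. m / (y - m))"
  define row :: "real mat" where "row = mat 1 k (\<lambda>_. 1)"
  have "y \<cdot>\<^sub>m 1\<^sub>m N - U * V = y \<cdot>\<^sub>m (1\<^sub>m N - ((1 / y) \<cdot>\<^sub>m U) * V)"
    unfolding mult_smult_assoc_mat[OF U V] using U V \<open>y \<noteq> 0\<close> by (intro eq_matI) (auto simp: field_simps)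
  moreover have "det (1\<^sub>m N - ((1 / y) \<cdot>\<^sub>m U) * V) = det (1\<^sub>m k - (1 / y) \<cdot>\<^sub>m (V * U))"
    using det_one_minus_mult_comm[of "(1 / y) \<cdot>\<^sub>m U" N k V] U V by (simp add: mult_smult_distrib)
  moreover have "1\<^sub>m k - (1 / y) \<cdot>\<^sub>m (V * U) = (1 - m / y) \<cdot>\<^sub>m (1\<^sub>m k - col * row)"
    unfolding VU col_def row_def using \<open>y \<noteq> 0\<close> \<open>y \<noteq> m\<close>
    by (intro eq_matI) (auto simp: scalar_prod_def field_simps)
  moreover have "det (1\<^sub>m k - col * row) = det (1\<^sub>m 1 - row * col)"
    by (rule det_one_minus_mult_comm) (auto simp: col_def row_def)
  moreover have "det (1\<^sub>m 1 - row * col) = 1 - k * m / (y - m)"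
    by (subst det_single) (auto simp: col_def row_def scalar_prod_def)
  ultimately have "det (y \<cdot>\<^sub>m 1\<^sub>m N - U * V) = y ^ N * ((1 - m / y) ^ k * (1 - k * m / (y - m)))"
    using V by (simp add: row_def)
  also have "y ^ N = y ^ (N - k) * y ^ k"
    using \<open>k \<le> N\<close> by (simp flip: power_add)
  also have "1 - m / y = (y - m) / y"
    using \<open>y \<noteq> 0\<close> by (simp add: field_simps)
  also have "1 - k * m / (y - m) = (y - (real k + 1) * m) / (y - m)"
    using \<open>y \<noteq> m\<close> by (simp add: field_simps)
  also have "y ^ (N - k) * y ^ k * (((y - m) / y) ^ k * ((y - (real k + 1) * m) / (y - m)))
      = y ^ (N - k) * (y - m) ^ (k - 1) * (y - (real k + 1) * m)"
    using \<open>1 \<le> k\<close> \<open>y \<noteq> 0\<close> \<open>y \<noteq> m\<close>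
    by (cases k) (simp_all add: power_divide)
  finally show ?thesis .
qed

lemma poly_eqI_cofinite:
  fixes p q :: "'a::{idom, ring_char_0} poly"
  assumes "finite S" and "\<And>x. x \<notin> S \<Longrightarrow> poly p x = poly q x"
  shows "p = q"
proof (rule ccontr)
  assume "p \<noteq> q"
  then have "finite {x. poly (p - q) x = 0}"
    by (intro poly_roots_finite) simp
  moreover have "- S \<subseteq> {x. poly (p - q) x = 0}"
    using assms(2) by auto
  ultimately have "finite (- S)"
    by (rule finite_subset[rotated])
  with \<open>finite S\<close> show False
    by (metis Compl_partition finite_UnI infinite_UNIV_char_0)
qed

lemma char_poly_scalar_plus_mult_I_plus_J:
  fixes U W :: "real mat" and c m :: real
  assumes U: "U \<in> carrier_mat N k" and W: "W \<in> carrier_mat k N"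
    and WU: "W * U = mat k k (\<lambda>(a, b). m * (if a = b then 2 else 1))"
    and "1 \<le> k" "k \<le> N"
  shows "char_poly (c \<cdot>\<^sub>m 1\<^sub>m N + U * W)
    = [:- c, 1:] ^ (N - k) * [:- (c + m), 1:] ^ (k - 1) * [:- (c + (real k + 1) * m), 1:]"
proof (rule poly_eqI_cofinite)
  fix x assume "x \<notin> {c, c + m}"
  then have "x - c \<noteq> 0" "x - c \<noteq> m" by auto
  have A: "c \<cdot>\<^sub>m 1\<^sub>m N + U * W \<in> carrier_mat N N"
    using U W by simp
  have "- char_matrix (c \<cdot>\<^sub>m 1\<^sub>m N + U * W) x = (x - c) \<cdot>\<^sub>m 1\<^sub>m N - U * W"
    using U W unfolding char_matrix_def by (intro eq_matI) (auto simp: algebra_simps)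
  then show "poly (char_poly (c \<cdot>\<^sub>m 1\<^sub>m N + U * W)) x
    = poly ([:- c, 1:] ^ (N - k) * [:- (c + m), 1:] ^ (k - 1) * [:- (c + (real k + 1) * m), 1:]) x"
    using char_poly_matrix[OF A] det_scalar_minus_mult_I_plus_J[OF U W WU assms(4,5)
        \<open>x - c \<noteq> 0\<close> \<open>x - c \<noteq> m\<close>]
    by (simp add: algebra_simps)
qed simp

lemma short_walk_ends:
  assumes "is_walk V E xs" "length xs \<le> 2"
  shows "hd xs = last xs \<or> E (hd xs) (last xs)"
proof -
  consider a where "xs = [a]" | a b where "xs = [a, b]"
    using assms by (cases xs rule: remdups_adj.cases) (auto simp: is_walk_def)
  then show ?thesis
    by cases (use assms(1) in \<open>auto simp: is_walk_def\<close>)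
qed

lemma gdist_self: "u \<in> V \<Longrightarrow> gdist V E u u = 0"
  unfolding gdist_def by (rule Least_eq_0) (auto simp: is_walk_def intro!: exI[of _ "[u]"])

lemma gdist_eq_1:
  assumes "u \<in> V" "v \<in> V" "u \<noteq> v" "E u v"
  shows "gdist V E u v = 1"
  unfolding gdist_def
proof (rule Least_equality)
  show "\<exists>xs. is_walk V E xs \<and> hd xs = u \<and> last xs = v \<and> length xs = Suc 1"
    using assms by (auto simp: is_walk_def less_Suc_eq intro!: exI[of _ "[u, v]"])
  fix d assume "\<exists>xs. is_walk V E xs \<and> hd xs = u \<and> last xs = v \<and> length xs = Suc d"
  then obtain xs where "hd xs = u" "last xs = v" "length xs = Suc d"
    by blast
  with \<open>u \<noteq> v\<close> show "1 \<le> d"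
    by (cases xs) (auto simp: Suc_le_eq)
qed

lemma gdist_eq_2:
  assumes "u \<in> V" "v \<in> V" "w \<in> V" "u \<noteq> v" "\<not> E u v" "E u w" "E w v"
  shows "gdist V E u v = 2"
  unfolding gdist_def
proof (rule Least_equality)
  show "\<exists>xs. is_walk V E xs \<and> hd xs = u \<and> last xs = v \<and> length xs = Suc 2"
    using assms by (auto simp: is_walk_def less_Suc_eq intro!: exI[of _ "[u, w, v]"])
  fix d assume "\<exists>xs. is_walk V E xs \<and> hd xs = u \<and> last xs = v \<and> length xs = Suc d"
  then obtain xs where "is_walk V E xs" "hd xs = u" "last xs = v" "length xs = Suc d"
    by blast
  with short_walk_ends[of V E xs] assms(4,5) show "2 \<le> d"
    by fastforce
qed

locale balanced_complete_multipartite =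
  fixes V :: "'v set" and E :: "'v \<Rightarrow> 'v \<Rightarrow> bool" and part :: "'v \<Rightarrow> nat" and k m :: nat
  assumes finite_vertices: "finite V"
    and part_less: "v \<in> V \<Longrightarrow> part v < k"
    and card_part: "d < k \<Longrightarrow> card {v \<in> V. part v = d} = m"
    and adj_iff: "E u v \<longleftrightarrow> u \<in> V \<and> v \<in> V \<and> part u \<noteq> part v"
    and two_le_parts: "2 \<le> k"
    and part_size_pos: "0 < m"
begin

lemma exists_other_part:
  assumes "v \<in> V"
  obtains w where "w \<in> V" "part w \<noteq> part v"
proof -
  let ?d = "(part v + 1) mod k"
  have "?d \<noteq> part v"
    using part_less[OF assms] two_le_parts by (simp add: mod_Suc)
  have "card {w \<in> V. part w = ?d} = m"
    using card_part two_le_parts by simp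
  then have "{w \<in> V. part w = ?d} \<noteq> {}"
    using part_size_pos by (metis card.empty less_irrefl)
  then obtain w where "w \<in> V" "part w = ?d"
    by blast
  with \<open>?d \<noteq> part v\<close> show ?thesis
    using that by simp
qed

lemma gdist_eq:
  assumes "u \<in> V" "v \<in> V"
  shows "gdist V E u v = (if u = v then 0 else if part u = part v then 2 else 1)"
proof -
  consider "u = v" | "u \<noteq> v" "part u = part v" | "part u \<noteq> part v"
    by blast
  then show ?thesis
  proof cases
    case 2
    obtain w where "w \<in> V" "part w \<noteq> part u"
      using exists_other_part[OF \<open>u \<in> V\<close>] .
    with 2 assms show ?thesis
      by (simp add: gdist_eq_2[where w = w] adj_iff)
  qed (use assms in \<open>simp_all add: gdist_self gdist_eq_1 adj_iff\<close>)
qed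

lemma card_vertices: "card V = k * m"
proof -
  have "card (\<Union>d<k. {v \<in> V. part v = d}) = (\<Sum>d<k. card {v \<in> V. part v = d})"
    by (rule card_UN_disjoint) (use finite_vertices in auto)
  moreover have "(\<Union>d<k. {v \<in> V. part v = d}) = V"
    using part_less by blast
  ultimately show ?thesis
    by (simp add: card_part)
qed

lemma transmission_eq:
  assumes "v \<in> V"
  shows "transmission V E v = (k + 1) * m - 2"
proof -
  let ?g = "\<lambda>u. 1 + of_bool (part u = part v) :: nat"
  have "transmission V E v = (\<Sum>u\<in>V - {v}. ?g u)"
    unfolding transmission_def sum.remove[OF finite_vertices assms]
    using assms by (auto simp: gdist_eq gdist_self of_bool_def split: if_splits intro!: sum.cong)
  moreover have "(\<Sum>u\<in>V. ?g u) = 2 + (\<Sum>u\<in>V - {v}. ?g u)"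
    by (simp add: sum.remove[OF finite_vertices assms])
  moreover have "(\<Sum>u\<in>V. ?g u) = (\<Sum>u\<in>V. 1) + (\<Sum>u\<in>V. of_bool (part u = part v))"
    by (rule sum.distrib)
  moreover have "\<dots> = k * m + m"
    using card_vertices card_part[OF part_less[OF assms]] finite_vertices
    by (simp add: Int_def)
  ultimately show ?thesis
    by simp
qed

definition part_indicator :: "(nat \<Rightarrow> 'v) \<Rightarrow> real mat" where
  "part_indicator f = mat (card V) k (\<lambda>(i, d). of_bool (part (f i) = d))"

definition part_weight :: "(nat \<Rightarrow> 'v) \<Rightarrow> real mat" where
  "part_weight f = mat k (card V) (\<lambda>(d, j). 1 + of_bool (part (f j) = d))"

lemma part_indicator_carrier: "part_indicator f \<in> carrier_mat (card V) k"
  by (simp add: part_indicator_def)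

lemma part_weight_carrier: "part_weight f \<in> carrier_mat k (card V)"
  by (simp add: part_weight_def)

context
  fixes f :: "nat \<Rightarrow> 'v"
  assumes enum: "bij_betw f {0..<card V} V"
begin

lemma enum_in_vertices: "i < card V \<Longrightarrow> f i \<in> V"
  using bij_betw_apply[OF enum] by simp

lemma part_indicator_mult_part_weight:
  assumes "i < card V" "j < card V"
  shows "(part_indicator f * part_weight f) $$ (i, j) = 1 + of_bool (part (f i) = part (f j))"
proof -
  have "(part_indicator f * part_weight f) $$ (i, j)
      = (\<Sum>d = 0..<k. if d = part (f i) then 1 + of_bool (part (f i) = part (f j)) else 0)"
    using assms by (auto simp: part_indicator_def part_weight_def scalar_prod_def intro!: sum.cong)
  also have "\<dots> = 1 + of_bool (part (f i) = part (f j))"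
    using part_less enum_in_vertices assms(1) by simp
  finally show ?thesis .
qed

lemma dist_signless_laplacian_eq:
  "dist_signless_laplacian V E f
    = (real ((k + 1) * m) - 4) \<cdot>\<^sub>m 1\<^sub>m (card V) + part_indicator f * part_weight f"
proof -
  have entry: "dist_signless_laplacian V E f $$ (i, j)
      = (if i = j then real ((k + 1) * m) - 4 else 0) + (part_indicator f * part_weight f) $$ (i, j)"
    if ij: "i < card V" "j < card V" for i j
  proof (cases "i = j")
    case True
    have "2 \<le> (k + 1) * m"
      using mult_le_mono[of 2 "k + 1" 1 m] two_le_parts part_size_pos by simp
    with True ij part_indicator_mult_part_weight[OF ij] show ?thesis
      by (simp add: dist_signless_laplacian_def transmission_eq enum_in_vertices gdist_self of_nat_diff)
  next
    case False
    then have "f i \<noteq> f j"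
      using bij_betw_imp_inj_on[OF enum] ij by (auto simp: inj_on_def)
    with False ij part_indicator_mult_part_weight[OF ij] show ?thesis
      by (simp add: dist_signless_laplacian_def gdist_eq enum_in_vertices)
  qed
  have "dist_signless_laplacian V E f \<in> carrier_mat (card V) (card V)"
    by (simp add: dist_signless_laplacian_def)
  with part_indicator_carrier[of f] part_weight_carrier[of f] show ?thesis
    by (intro eq_matI) (auto simp: entry)
qed

lemma part_weight_mult_part_indicator:
  "part_weight f * part_indicator f = mat k k (\<lambda>(a, b). real m * (if a = b then 2 else 1))"
proof -
  have "(part_weight f * part_indicator f) $$ (a, b) = real m * (if a = b then 2 else 1)"
    if "a < k" "b < k" for a b
  proof -
    have "(part_weight f * part_indicator f) $$ (a, b)
        = (\<Sum>j = 0..<card V. (1 + of_bool (part (f j) = a)) * of_bool (part (f j) = b))"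
      using that by (simp add: part_indicator_def part_weight_def scalar_prod_def)
    also have "\<dots> = (\<Sum>v\<in>V. (1 + of_bool (part v = a)) * of_bool (part v = b))"
      by (rule sum.reindex_bij_betw[OF enum])
    also have "\<dots> = (\<Sum>v\<in>V. if part v = b then 1 + of_bool (b = a) else 0)"
      by (intro sum.cong) auto
    also have "\<dots> = (\<Sum>v\<in>{v \<in> V. part v = b}. 1 + of_bool (b = a))"
      by (rule sum.inter_filter[OF finite_vertices, symmetric])
    also have "\<dots> = real m * (if a = b then 2 else 1)"
      using card_part[OF \<open>b < k\<close>] by auto
    finally show ?thesis .
  qed
  then show ?thesis
    by (intro eq_matI) (simp_all add: part_indicator_def part_weight_def)
qed

theorem char_poly_dist_signless_laplacian:
  "char_poly (dist_signless_laplacian V E f)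
    = [:- ((real k + 1) * m - 4), 1:] ^ (k * m - k)
      * [:- ((real k + 2) * m - 4), 1:] ^ (k - 1)
      * [:- (2 * (real k + 1) * m - 4), 1:]"
proof -
  have "char_poly (dist_signless_laplacian V E f)
    = [:- (real ((k + 1) * m) - 4), 1:] ^ (card V - k)
      * [:- (real ((k + 1) * m) - 4 + m), 1:] ^ (k - 1)
      * [:- (real ((k + 1) * m) - 4 + (real k + 1) * m), 1:]"
    unfolding dist_signless_laplacian_eq
    by (rule char_poly_scalar_plus_mult_I_plus_J[OF part_indicator_carrier part_weight_carrier
          part_weight_mult_part_indicator])
      (use two_le_parts part_size_pos in \<open>simp_all add: card_vertices\<close>)
  moreover have "real ((k + 1) * m) - 4 = (real k + 1) * m - 4"
    and "real ((k + 1) * m) - 4 + m = (real k + 2) * m - 4"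
    and "real ((k + 1) * m) - 4 + (real k + 1) * m = 2 * (real k + 1) * m - 4"
    and "card V - k = k * m - k"
    by (simp_all add: algebra_simps card_vertices)
  ultimately show ?thesis
    by (simp only:)
qed

end

end

(* The three non-trivial cosets of the centre: a Z, b Z and a b Z. *)
definition M8n_part :: "nat \<times> nat \<Rightarrow> nat" where
  "M8n_part u = (case u of (i, j) \<Rightarrow> if even j then 0 else if even i then 1 else 2)"

lemma less_4_cases: "(i::nat) < 4 \<Longrightarrow> i = 0 \<or> i = 1 \<or> i = 2 \<or> i = 3"
  by auto

lemma centre_M8n:
  assumes "n \<ge> 1"
  shows "centre (M8n_carrier n) (M8n_mult n) = {(i, j). i < 4 \<and> j < 2 * n \<and> even i \<and> even j}"
proof (rule Set.set_eqI, rule iffI)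
  fix u :: "nat \<times> nat" assume u: "u \<in> centre (M8n_carrier n) (M8n_mult n)"
  obtain i j where "u = (i, j)" "i < 4" "j < 2 * n"
    using u by (auto simp: centre_def M8n_carrier_def)
  moreover have "(1, 0) \<in> M8n_carrier n" "(0, 1) \<in> M8n_carrier n"
    using assms by (auto simp: M8n_carrier_def)
  then have "M8n_mult n u (1, 0) = M8n_mult n (1, 0) u" "M8n_mult n u (0, 1) = M8n_mult n (0, 1) u"
    using u by (auto simp: centre_def)
  ultimately show "u \<in> {(i, j). i < 4 \<and> j < 2 * n \<and> even i \<and> even j}"
    using less_4_cases[of i] by (auto simp: M8n_mult_def split: if_splits)
next
  fix u :: "nat \<times> nat" assume "u \<in> {(i, j). i < 4 \<and> j < 2 * n \<and> even i \<and> even j}"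
  then obtain i j where u: "u = (i, j)" "i < 4" "j < 2 * n" "even i" "even j"
    by auto
  have "M8n_mult n u x = M8n_mult n x u" if "x \<in> M8n_carrier n" for x
    using that u less_4_cases[of i] less_4_cases[of "fst x"]
    by (auto simp: M8n_mult_def M8n_carrier_def add.commute)
  then show "u \<in> centre (M8n_carrier n) (M8n_mult n)"
    using u by (auto simp: centre_def M8n_carrier_def)
qed

lemma ncg_vertices_M8n:
  assumes "n \<ge> 1"
  shows "ncg_vertices (M8n_carrier n) (M8n_mult n) = {(i, j). i < 4 \<and> j < 2 * n \<and> \<not> (even i \<and> even j)}"
  unfolding ncg_vertices_def centre_M8n[OF assms] by (auto simp: M8n_carrier_def)

lemma M8n_commute_iff:
  assumes "n \<ge> 1" "u \<in> ncg_vertices (M8n_carrier n) (M8n_mult n)" "v \<in> ncg_vertices (M8n_carrier n) (M8n_mult n)"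
  shows "M8n_mult n u v = M8n_mult n v u \<longleftrightarrow> M8n_part u = M8n_part v"
proof -
  obtain i j k l where "u = (i, j)" "v = (k, l)" "i < 4" "k < 4"
    "\<not> (even i \<and> even j)" "\<not> (even k \<and> even l)"
    using assms by (auto simp: ncg_vertices_M8n)
  then show ?thesis
    using less_4_cases[of i] less_4_cases[of k]
    by (cases "even j"; cases "even l") (auto simp: M8n_mult_def M8n_part_def add.commute)
qed

lemma card_even_below: "card {j. j < 2 * n \<and> even (j::nat)} = n"
proof -
  have "{j. j < 2 * n \<and> even (j::nat)} = (\<lambda>i. 2 * i) ` {..<n}"
    by (auto elim!: evenE)
  then show ?thesis
    by (simp add: card_image inj_on_def)
qed

lemma card_odd_below: "card {j. j < 2 * n \<and> odd (j::nat)} = n"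
proof -
  have "{j. j < 2 * n \<and> odd (j::nat)} = (\<lambda>i. 2 * i + 1) ` {..<n}"
    by (auto elim!: oddE)
  then show ?thesis
    by (simp add: card_image inj_on_def)
qed

lemma M8n_part_classes:
  assumes "n \<ge> 1"
  shows "{u \<in> ncg_vertices (M8n_carrier n) (M8n_mult n). M8n_part u = 0}
      = {i. i < 2 * 2 \<and> odd i} \<times> {j. j < 2 * n \<and> even j}"
    and "{u \<in> ncg_vertices (M8n_carrier n) (M8n_mult n). M8n_part u = 1}
      = {i. i < 2 * 2 \<and> even i} \<times> {j. j < 2 * n \<and> odd j}"
    and "{u \<in> ncg_vertices (M8n_carrier n) (M8n_mult n). M8n_part u = 2}
      = {i. i < 2 * 2 \<and> odd i} \<times> {j. j < 2 * n \<and> odd j}"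
  by (auto simp: ncg_vertices_M8n[OF assms] M8n_part_def split: if_splits)

lemma card_M8n_part:
  assumes "n \<ge> 1" "d < 3"
  shows "card {u \<in> ncg_vertices (M8n_carrier n) (M8n_mult n). M8n_part u = d} = 2 * n"
proof -
  have "d = 0 \<or> d = 1 \<or> d = 2"
    using assms(2) by auto
  then show ?thesis
    by (elim disjE) (simp_all only: M8n_part_classes[OF assms(1)] card_cartesian_product
        card_even_below card_odd_below)
qed

lemma balanced_complete_multipartite_M8n:
  assumes "n \<ge> 1"
  shows "balanced_complete_multipartite (ncg_vertices (M8n_carrier n) (M8n_mult n))
    (ncg_adj (M8n_carrier n) (M8n_mult n)) M8n_part 3 (2 * n)"
proof
  show "finite (ncg_vertices (M8n_carrier n) (M8n_mult n))"
    by (simp add: ncg_vertices_def M8n_carrier_def)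
  show "M8n_part v < 3" for v
    by (auto simp: M8n_part_def split: prod.splits)
  show "ncg_adj (M8n_carrier n) (M8n_mult n) u v \<longleftrightarrow> u \<in> ncg_vertices (M8n_carrier n) (M8n_mult n)
      \<and> v \<in> ncg_vertices (M8n_carrier n) (M8n_mult n) \<and> M8n_part u \<noteq> M8n_part v" for u v
    using M8n_commute_iff[OF assms, of u v] unfolding ncg_adj_def by blast
qed (use assms card_M8n_part in auto)

theorem theorem6p6:
  fixes n :: nat and f :: "nat \<Rightarrow> nat \<times> nat"
  assumes "n \<ge> 1"
    and "bij_betw f {0..<card (ncg_vertices (M8n_carrier n) (M8n_mult n))}
                    (ncg_vertices (M8n_carrier n) (M8n_mult n))"
  shows "char_poly (dist_signless_laplacian (ncg_vertices (M8n_carrier n) (M8n_mult n))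
                      (ncg_adj (M8n_carrier n) (M8n_mult n)) f)
       = [:- (8 * real n - 4), 1:] ^ (3 * (2 * n - 1))
         * [:- (10 * real n - 4), 1:] ^ 2
         * [:- (16 * real n - 4), 1:]"
proof -
  interpret balanced_complete_multipartite "ncg_vertices (M8n_carrier n) (M8n_mult n)"
      "ncg_adj (M8n_carrier n) (M8n_mult n)" M8n_part 3 "2 * n"
    by (rule balanced_complete_multipartite_M8n[OF assms(1)])
  have "(real 3 + 1) * real (2 * n) - 4 = 8 * real n - 4"
    and "(real 3 + 2) * real (2 * n) - 4 = 10 * real n - 4"
    and "2 * (real 3 + 1) * real (2 * n) - 4 = 16 * real n - 4"
    and "3 * (2 * n) - 3 = 3 * (2 * n - 1)" "3 - 1 = (2::nat)"
    by simp_all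
  with char_poly_dist_signless_laplacian[OF assms(2)] show ?thesis
    by (simp only:)
qed

end
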